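(* Let $A,B\in\mathrm{SL}_2\mathbb{Z}$ be noncommuting, well oriented, with $2\le\mathrm{tr}(A)<\mathrm{tr}(B)$ and $\mathrm{tr}(AB)>\mathrm{tr}(B^2)$, and assume $[(ab)^3]\le[(ab^2)^2]-2$. Fix a word $w$ and let $k,h\ge0$ be such that the length of $ab^2wab(ab^2)^kab(ab^2)^hab$ is a multiple of $6$. If $w$ is empty, or is a product of copies of $ab$ and $ab^2$, then $[ab^2wab(ab^2)^kab(ab^2)^hab]<[ab^2w(ab^2)^{k+h+2}]$.
   Context: Words are finite strings over $\{a,b\}$; $\phi$ is the monoid homomorphism with $\phi(a)=A,\phi(b)=B$, and $[w]=\mathrm{tr}(\phi(w))$. Fixed points are for the Möbius action on $\partial\mathcal{H}=\mathbb{P}^1\mathbb{R}$; $\alpha^\pm$ ($\beta^\pm$) are the attracting/repelling fixed points of $A$ ($B$), both equal to the unique fixed point if parabolic. With $\partial\mathcal{H}$ cyclically ordered and $[\alpha,\beta]$ the closed counterclockwise interval from $\alpha$ to $\beta$, let $I^+=\{\alpha^+\}$ if $\alpha^+=\beta^+$, and otherwise the one of $[\alpha^+,\beta^+],[\beta^+,\alpha^+]$ mapped into itself by both $A$ and $B$ (if it exists); define $I^-$ likewise with $A^{-1},B^{-1},\alpha^-,\beta^-$. The pair is coherently oriented if both exist, and well oriented if $A,B$ is coherently oriented but $A,B^{-1}$ is not. *)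

theory Defs
  imports "HOL-Analysis.Analysis"
begin

type_synonym mat2 = "int^2^2"

definition SL2Z :: "mat2 set" where
  "SL2Z = {M. det M = 1}"

definition sl2_inv :: "mat2 \<Rightarrow> mat2" where
  "sl2_inv M = (\<chi> i j. if i = 1 \<and> j = 1 then M$2$2
                        else if i = 1 \<and> j = 2 then - M$1$2
                        else if i = 2 \<and> j = 1 then - M$2$1
                        else M$1$1)"

(* points of the boundary RP^1 = R \<union> {\<infinity>}: Some x = x, None = \<infinity> *)
type_synonym p1 = "real option"

definition moeb :: "mat2 \<Rightarrow> p1 \<Rightarrow> p1" where
  "moeb M p = (let a = real_of_int (M$1$1); b = real_of_int (M$1$2);
                   c = real_of_int (M$2$1); d = real_of_int (M$2$2) in
     (case p of
        Some z \<Rightarrow> (if c * z + d \<noteq> 0 then Some ((a * z + b) / (c * z + d)) else None)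
      | None \<Rightarrow> (if c \<noteq> 0 then Some (a / c) else None)))"

definition is_fix :: "mat2 \<Rightarrow> p1 \<Rightarrow> bool" where
  "is_fix M p \<longleftrightarrow> moeb M p = p"

(* eigenvalue of M on the line representing the fixed point p:
   at z = [z:1] it is c z + d, at \<infinity> = [1:0] it is a.
   The derivative of the Moebius map at p is 1/(mult)^2, so p is attracting
   iff |mult| > 1 and repelling iff |mult| < 1; at a parabolic fixed point |mult| = 1. *)
definition mult :: "mat2 \<Rightarrow> p1 \<Rightarrow> real" where
  "mult M p = (case p of Some z \<Rightarrow> real_of_int (M$2$1) * z + real_of_int (M$2$2)
                        | None \<Rightarrow> real_of_int (M$1$1))"

definition attr :: "mat2 \<Rightarrow> p1" where
  "attr M = (THE p. is_fix M p \<and> \<bar>mult M p\<bar> \<ge> 1)"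

definition repl :: "mat2 \<Rightarrow> p1" where
  "repl M = (THE p. is_fix M p \<and> \<bar>mult M p\<bar> \<le> 1)"

(* closed cyclic interval from x to y in the cyclic order of R \<union> {\<infinity>}
   (increasing along R, then \<infinity>, then back to -\<infinity>) *)
definition cint :: "p1 \<Rightarrow> p1 \<Rightarrow> p1 set" where
  "cint x y = (case (x, y) of
      (Some u, Some v) \<Rightarrow> (if u \<le> v then {Some z | z. u \<le> z \<and> z \<le> v}
                           else {Some z | z. u \<le> z} \<union> {None} \<union> {Some z | z. z \<le> v})
    | (Some u, None) \<Rightarrow> {Some z | z. u \<le> z} \<union> {None}
    | (None, Some v) \<Rightarrow> {None} \<union> {Some z | z. z \<le> v}
    | (None, None) \<Rightarrow> {None})"

definition invariant_int :: "mat2 \<Rightarrow> mat2 \<Rightarrow> p1 set \<Rightarrow> bool" where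
  "invariant_int A B I \<longleftrightarrow> moeb A ` I \<subseteq> I \<and> moeb B ` I \<subseteq> I"

definition Iplus_exists :: "mat2 \<Rightarrow> mat2 \<Rightarrow> bool" where
  "Iplus_exists A B \<longleftrightarrow> attr A = attr B \<or>
     invariant_int A B (cint (attr A) (attr B)) \<or> invariant_int A B (cint (attr B) (attr A))"

definition Iminus_exists :: "mat2 \<Rightarrow> mat2 \<Rightarrow> bool" where
  "Iminus_exists A B \<longleftrightarrow> repl A = repl B \<or>
     invariant_int (sl2_inv A) (sl2_inv B) (cint (repl A) (repl B)) \<or>
     invariant_int (sl2_inv A) (sl2_inv B) (cint (repl B) (repl A))"

definition coherently_oriented :: "mat2 \<Rightarrow> mat2 \<Rightarrow> bool" where
  "coherently_oriented A B \<longleftrightarrow> Iplus_exists A B \<and> Iminus_exists A B"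

definition well_oriented :: "mat2 \<Rightarrow> mat2 \<Rightarrow> bool" where
  "well_oriented A B \<longleftrightarrow> coherently_oriented A B \<and> \<not> coherently_oriented A (sl2_inv B)"

datatype letter = La | Lb

fun phi :: "mat2 \<Rightarrow> mat2 \<Rightarrow> letter list \<Rightarrow> mat2" where
  "phi A B [] = mat 1"
| "phi A B (l # w) = (case l of La \<Rightarrow> A | Lb \<Rightarrow> B) ** phi A B w"

definition trw :: "mat2 \<Rightarrow> mat2 \<Rightarrow> letter list \<Rightarrow> int" where
  "trw A B w = trace (phi A B w)"

definition wpow :: "letter list \<Rightarrow> nat \<Rightarrow> letter list" where
  "wpow u n = concat (replicate n u)"

end

theory Submission
  imports Defs
begin

text \<open>The trace hypotheses force \<open>tr AB = (tr B)\<^sup>2 - 1\<close> and \<open>2 tr A \<le> tr B\<close>. Since the trace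
  of a word in \<open>A, B\<close> is a polynomial in \<open>tr A, tr B, tr AB\<close>, we may replace \<open>A, B\<close> by a
  real pair with the same three traces and nonnegative entries, parametrised by
  \<open>e = tr A - 2 \<ge> 0\<close>, \<open>d = tr B - 2 tr A \<ge> 0\<close> and the larger eigenvalue \<open>u\<close> of \<open>B\<close>.
  Both words start with \<open>ab\<^sup>2w\<close>, so the difference of their traces is \<open>tr (Q N A)\<close>, where
  \<open>Q = \<phi>(b\<^sup>2w)\<close> is nonnegative of determinant 1 and
  \<open>N = \<phi>((ab\<^sup>2)\<^sup>k\<^sup>+\<^sup>h\<^sup>+\<^sup>2) - \<phi>(ab (ab\<^sup>2)\<^sup>k ab (ab\<^sup>2)\<^sup>h ab)\<close>. In \<open>k\<close> and in \<open>h\<close>,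
  \<open>N A\<close> satisfies the Chebyshev recurrence \<open>X\<^sub>n\<^sub>+\<^sub>2 = t X\<^sub>n\<^sub>+\<^sub>1 - X\<^sub>n\<close> with
  \<open>t = tr (ab\<^sup>2) \<ge> 2\<close>, so its entries are positive as soon as the four cases \<open>k, h \<le> 1\<close>
  behave; these are certified by exact computation in \<open>\<int>[e, d][u]\<close>.\<close>

section \<open>Two-by-two matrices\<close>

definition m22 :: "'a \<Rightarrow> 'a \<Rightarrow> 'a \<Rightarrow> 'a \<Rightarrow> 'a^2^2" where
  "m22 a b c d = (\<chi> i j. if i = 1 then (if j = 1 then a else b) else (if j = 1 then c else d))"

lemma m22_nth [simp]:
  "m22 a b c d $ 1 $ 1 = a" "m22 a b c d $ 1 $ 2 = b" "m22 a b c d $ 2 $ 1 = c" "m22 a b c d $ 2 $ 2 = d"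
  by (simp_all add: m22_def)

lemma m22_cases:
  obtains a b c d where "M = m22 a b c d"
proof
  show "M = m22 (M$1$1) (M$1$2) (M$2$1) (M$2$2)"
    by (simp add: m22_def vec_eq_iff forall_2)
qed

lemma m22_eq_iff: "m22 a b c d = m22 a' b' c' d' \<longleftrightarrow> a = a' \<and> b = b' \<and> c = c' \<and> d = d'"
  by (auto simp: vec_eq_iff forall_2 m22_def)

lemma m22_mult:
  "(m22 a b c d :: 'a::semiring_1^2^2) ** m22 a' b' c' d' =
     m22 (a*a' + b*c') (a*b' + b*d') (c*a' + d*c') (c*b' + d*d')"
  by (simp add: matrix_matrix_mult_def sum_2 vec_eq_iff forall_2 m22_def)

lemma m22_one: "(mat 1 :: 'a::zero_neq_one^2^2) = m22 1 0 0 1"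
  by (simp add: mat_def m22_def vec_eq_iff forall_2)

lemma m22_add: "m22 a b c d + m22 a' b' c' d' = m22 (a+a') (b+b') (c+c') (d+d')"
  by (simp add: m22_def vec_eq_iff forall_2)

lemma m22_diff: "m22 a b c d - m22 a' b' c' d' = m22 (a-a') (b-b') (c-c') (d-d')"
  by (simp add: m22_def vec_eq_iff forall_2)

lemma scaleR_m22: "r *\<^sub>R m22 a b c d = m22 (r *\<^sub>R a) (r *\<^sub>R b) (r *\<^sub>R c) (r *\<^sub>R d)"
  by (simp add: m22_def vec_eq_iff forall_2)

lemma trace_m22: "trace (m22 a b c d :: 'a::semiring_1^2^2) = a + d"
  by (simp add: trace_def sum_2)

lemma det_m22: "det (m22 a b c d :: 'a::comm_ring_1^2^2) = a*d - b*c"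
  by (simp add: det_2)

lemma matrix_diff_ldistrib: "(A :: 'a::ring_1^'n^'m) ** (B - C) = A ** B - A ** C"
  by (simp add: matrix_matrix_mult_def vec_eq_iff sum_subtractf algebra_simps)

lemma matrix_diff_rdistrib: "((A :: 'a::ring_1^'n^'m) - B) ** C = A ** C - B ** C"
  by (simp add: matrix_matrix_mult_def vec_eq_iff sum_subtractf algebra_simps)

lemma cayley_hamilton_2: "(M :: real^2^2) ** M = trace M *\<^sub>R M - det M *\<^sub>R mat 1"
proof -
  obtain a b c d where M: "M = m22 a b c d" by (rule m22_cases)
  show ?thesis
    unfolding M m22_mult trace_m22 det_m22 m22_one scaleR_m22 m22_diff m22_eq_iff
    by (simp add: algebra_simps)
qed

lemma matrix_mul_nonneg:
  fixes M :: "'a::ordered_semiring_1^'n^'m" and N :: "'a^'k^'n"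
  assumes "\<And>i j. 0 \<le> M$i$j" and "\<And>i j. 0 \<le> N$i$j"
  shows "0 \<le> (M ** N)$i$j"
  using assms by (simp add: matrix_matrix_mult_def sum_nonneg)

lemma trace_ge_2_if_nonneg_det_1:
  fixes M :: "real^2^2"
  assumes "\<And>i j. 0 \<le> M$i$j" and "det M = 1"
  shows "2 \<le> trace M"
proof -
  obtain a b c d where M: "M = m22 a b c d" by (rule m22_cases)
  have "0 \<le> a" "0 \<le> b" "0 \<le> c" "0 \<le> d" "a * d - b * c = 1"
    using assms(1)[of 1 1] assms(1)[of 1 2] assms(1)[of 2 1] assms(1)[of 2 2] assms(2)
    by (simp_all add: M det_m22)
  then have "1 \<le> a * d" using mult_nonneg_nonneg[of b c] by linarith
  have "(a + d)^2 = (a - d)^2 + 4 * (a * d)" by algebra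
  then have "4 \<le> (a + d)^2" using \<open>1 \<le> a * d\<close> zero_le_power2[of "a - d"] by linarith
  then have "2 \<le> a + d" using power2_le_imp_le[of 2 "a + d"] \<open>0 \<le> a\<close> \<open>0 \<le> d\<close> by simp
  then show ?thesis by (simp add: M trace_m22)
qed

lemma trace_mult_pos:
  fixes Q F :: "real^2^2"
  assumes "\<And>i j. 0 \<le> Q$i$j" and "det Q = 1" and "\<And>i j. 0 < F$i$j"
  shows "0 < trace (Q ** F)"
proof -
  obtain a b c d where Q: "Q = m22 a b c d" by (rule m22_cases)
  obtain a' b' c' d' where F: "F = m22 a' b' c' d'" by (rule m22_cases)
  have "0 \<le> a" "0 \<le> b" "0 \<le> c" "0 \<le> d" "a * d - b * c = 1"
    using assms(1)[of 1 1] assms(1)[of 1 2] assms(1)[of 2 1] assms(1)[of 2 2] assms(2)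
    by (simp_all add: Q det_m22)
  moreover have "0 < a'" "0 < b'" "0 < c'" "0 < d'"
    using assms(3)[of 1 1] assms(3)[of 1 2] assms(3)[of 2 1] assms(3)[of 2 2] by (simp_all add: F)
  ultimately have "0 < a * a' + b * c' + c * b' + d * d'"
    by (smt (verit) mult_nonneg_nonneg mult_pos_pos mult_eq_0_iff)
  then show ?thesis by (simp add: Q F m22_mult trace_m22)
qed

section \<open>Traces of words\<close>

fun word_mat :: "'a::semiring_1^2^2 \<Rightarrow> 'a^2^2 \<Rightarrow> letter list \<Rightarrow> 'a^2^2" where
  "word_mat A B [] = mat 1"
| "word_mat A B (l # w) = (case l of La \<Rightarrow> A | Lb \<Rightarrow> B) ** word_mat A B w"

lemma phi_eq_word_mat: "phi A B w = word_mat A B w"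
  by (induction w) auto

lemma word_mat_append: "word_mat A B (u @ v) = word_mat A B u ** word_mat A B v"
  by (induction u) (auto simp: matrix_mul_assoc)

lemma det_word_mat:
  "det (A :: 'a::comm_ring_1^2^2) = 1 \<Longrightarrow> det B = 1 \<Longrightarrow> det (word_mat A B w) = 1"
  by (induction w) (auto simp: det_mul split: letter.splits)

lemma word_mat_nonneg:
  fixes A B :: "'a::ordered_semiring_1^2^2"
  assumes "\<And>i j. 0 \<le> A$i$j" and "\<And>i j. 0 \<le> B$i$j"
  shows "0 \<le> word_mat A B w $ i $ j"
proof (induction w arbitrary: i j)
  case Nil
  then show ?case by (simp add: mat_def)
next
  case (Cons l w)
  then show ?case using assms by (cases l) (auto intro!: matrix_mul_nonneg)
qed

lemma wpow_Suc: "wpow u (Suc n) = u @ wpow u n"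
  by (simp add: wpow_def)

lemma word_mat_wpow_recurrence:
  fixes A B :: "real^2^2"
  assumes "det (word_mat A B u) = 1"
  shows "word_mat A B (wpow u (Suc (Suc n))) =
    trace (word_mat A B u) *\<^sub>R word_mat A B (wpow u (Suc n)) - word_mat A B (wpow u n)"
proof -
  let ?M = "word_mat A B u"
  have "word_mat A B (wpow u (Suc (Suc n))) = (?M ** ?M) ** word_mat A B (wpow u n)"
    by (simp add: wpow_Suc word_mat_append matrix_mul_assoc)
  also have "\<dots> = trace ?M *\<^sub>R (?M ** word_mat A B (wpow u n)) - word_mat A B (wpow u n)"
    by (simp add: cayley_hamilton_2 assms matrix_diff_rdistrib scalar_matrix_assoc)
  finally show ?thesis by (simp add: wpow_Suc word_mat_append)
qed

text \<open>Coordinates of \<open>\<phi>(w)\<close> in the basis \<open>I, A, B, AB\<close>, where \<open>x, y, z\<close> stand for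
  \<open>tr A, tr B, tr AB\<close>. The recursion encodes \<open>A\<^sup>2 = xA - I\<close>, \<open>A (AB) = x AB - B\<close>,
  \<open>B\<^sup>2 = yB - I\<close>, \<open>BA = (z - xy) I + yA + xB - AB\<close> and \<open>B (AB) = -xI + A + zB\<close>.\<close>

fun word_coords :: "'a::comm_ring_1 \<Rightarrow> 'a \<Rightarrow> 'a \<Rightarrow> letter list \<Rightarrow> 'a \<times> 'a \<times> 'a \<times> 'a" where
  "word_coords x y z [] = (1, 0, 0, 0)"
| "word_coords x y z (l # w) = (case word_coords x y z w of (c0, c1, c2, c3) \<Rightarrow>
     (case l of
        La \<Rightarrow> (- c1, c0 + x * c1, - c3, c2 + x * c3)
      | Lb \<Rightarrow> (c1 * (z - x * y) - c2 - x * c3, y * c1 + c3, c0 + x * c1 + y * c2 + z * c3, - c1)))"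

definition coords_mat :: "'a::comm_ring_1 \<times> 'a \<times> 'a \<times> 'a \<Rightarrow> 'a^2^2 \<Rightarrow> 'a^2^2 \<Rightarrow> 'a^2^2" where
  "coords_mat c A B = (case c of (c0, c1, c2, c3) \<Rightarrow>
     (\<chi> i j. c0 * mat 1 $ i $ j + c1 * A $ i $ j + c2 * B $ i $ j + c3 * (A ** B) $ i $ j))"

lemma word_mat_eq_coords_mat:
  fixes A B :: "'a::idom^2^2"
  assumes "det A = 1" and "det B = 1"
  shows "word_mat A B w = coords_mat (word_coords (trace A) (trace B) (trace (A ** B)) w) A B"
proof -
  obtain a1 a2 a3 a4 where A: "A = m22 a1 a2 a3 a4" by (rule m22_cases)
  obtain b1 b2 b3 b4 where B: "B = m22 b1 b2 b3 b4" by (rule m22_cases)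
  have dA: "a1 * a4 - a2 * a3 = 1" and dB: "b1 * b4 - b2 * b3 = 1"
    using assms by (simp_all add: A B det_m22)
  have coords_mat_m22: "coords_mat (c0, c1, c2, c3) (m22 a1 a2 a3 a4) (m22 b1 b2 b3 b4) =
    m22 (c0 + c1*a1 + c2*b1 + c3*(a1*b1 + a2*b3)) (c1*a2 + c2*b2 + c3*(a1*b2 + a2*b4))
        (c1*a3 + c2*b3 + c3*(a3*b1 + a4*b3)) (c0 + c1*a4 + c2*b4 + c3*(a3*b2 + a4*b4))"
    for c0 c1 c2 c3
    by (simp add: coords_mat_def m22_mult m22_one) (simp add: m22_def vec_eq_iff forall_2)
  have mult_A: "A ** coords_mat (c0, c1, c2, c3) A B =
      coords_mat (- c1, c0 + trace A * c1, - c3, c2 + trace A * c3) A B" for c0 c1 c2 c3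
    using dA by (simp add: A B coords_mat_m22 m22_mult trace_m22 m22_eq_iff) (intro conjI; algebra)
  have mult_B: "B ** coords_mat (c0, c1, c2, c3) A B =
      coords_mat (c1 * (trace (A ** B) - trace A * trace B) - c2 - trace A * c3, trace B * c1 + c3,
        c0 + trace A * c1 + trace B * c2 + trace (A ** B) * c3, - c1) A B" for c0 c1 c2 c3
    using dA dB by (simp add: A B coords_mat_m22 m22_mult trace_m22 m22_eq_iff) (intro conjI; algebra)
  show ?thesis
  proof (induction w)
    case Nil
    then show ?case by (simp add: A B coords_mat_m22 m22_one)
  next
    case (Cons l w)
    obtain c0 c1 c2 c3 where "word_coords (trace A) (trace B) (trace (A ** B)) w = (c0, c1, c2, c3)"
      by (metis prod_cases4)
    then show ?case using Cons.IH by (cases l) (simp_all add: mult_A mult_B)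
  qed
qed

definition trace_poly :: "'a::comm_ring_1 \<Rightarrow> 'a \<Rightarrow> 'a \<Rightarrow> letter list \<Rightarrow> 'a" where
  "trace_poly x y z w =
     (case word_coords x y z w of (c0, c1, c2, c3) \<Rightarrow> 2 * c0 + x * c1 + y * c2 + z * c3)"

lemma trace_word_mat:
  fixes A B :: "'a::idom^2^2"
  assumes "det A = 1" and "det B = 1"
  shows "trace (word_mat A B w) = trace_poly (trace A) (trace B) (trace (A ** B)) w"
proof -
  obtain a1 a2 a3 a4 where A: "A = m22 a1 a2 a3 a4" by (rule m22_cases)
  obtain b1 b2 b3 b4 where B: "B = m22 b1 b2 b3 b4" by (rule m22_cases)
  obtain c0 c1 c2 c3 where c: "word_coords (trace A) (trace B) (trace (A ** B)) w = (c0, c1, c2, c3)"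
    by (metis prod_cases4)
  show ?thesis
    unfolding word_mat_eq_coords_mat[OF assms] c trace_poly_def
    by (simp add: coords_mat_def A B m22_mult m22_one trace_def sum_2 algebra_simps)
qed

lemma word_coords_of_int:
  "word_coords (of_int x) (of_int y) (of_int z) w =
     (case word_coords x y z w of (c0, c1, c2, c3) \<Rightarrow> (of_int c0, of_int c1, of_int c2, of_int c3))"
  by (induction w) (auto split: prod.splits letter.splits)

lemma trace_poly_of_int: "trace_poly (of_int x) (of_int y) (of_int z) w = of_int (trace_poly x y z w)"
  by (simp add: trace_poly_def word_coords_of_int split: prod.splits)

lemma trace_poly_bb: "trace_poly x y z [Lb, Lb] = y^2 - 2"
  by (simp add: trace_poly_def power2_eq_square algebra_simps)

lemma trace_poly_ab_cubed: "trace_poly x y z (wpow [La, Lb] 3) = z^3 - 3 * z"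
  by (simp add: trace_poly_def wpow_def numeral_3_eq_3 power3_eq_cube algebra_simps)

lemma trace_poly_abb_squared: "trace_poly x y z (wpow [La, Lb, Lb] 2) = (y * z - x)^2 - 2"
  by (simp add: trace_poly_def wpow_def numeral_2_eq_2 power2_eq_square algebra_simps)

lemma traces_forced:
  fixes x y z :: int
  assumes x2: "2 \<le> x" and xy: "x < y" and zl: "y^2 - 2 < z"
    and cub: "z^3 - 3*z \<le> (y*z - x)^2 - 4"
  shows "z = y^2 - 1" and "2*x \<le> y"
proof -
  have y3: "3 \<le> y" using x2 xy by simp
  have "z \<le> y^2 - 1"
  proof (rule ccontr)
    assume "\<not> z \<le> y^2 - 1"
    then have zg: "y^2 \<le> z" by simp
    have z9: "9 \<le> z" using zg y3 power_mono[of 3 y 2] by simp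
    have "z^2 * y^2 \<le> z^2 * z" using zg by (simp add: mult_left_mono)
    then have cube: "y^2*z^2 \<le> z^3" by (simp add: power2_eq_square power3_eq_cube algebra_simps)
    have xx: "x^2 \<le> z" using xy x2 zg power_strict_mono[of x y 2] by simp
    have "2*3 \<le> x*y" using x2 y3 mult_mono[of 2 x 3 y] by simp
    then have "6*z \<le> x*y*z" using z9 mult_right_mono[of 6 "x*y" z] by simp
    then have "2*(x*y*z) - 3*z - x^2 + 4 > 0" using xx z9 by linarith
    moreover have "(y*z - x)^2 - 4 - (z^3 - 3*z) = y^2*z^2 - z^3 - (2*(x*y*z) - 3*z - x^2 + 4)"
      by (simp add: power2_eq_square power3_eq_cube algebra_simps)
    ultimately show False using cub cube by linarith
  qed
  then show zeq: "z = y^2 - 1" using zl by simp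
  have "(y*z - x)^2 - 4 - (z^3 - 3*z) = (y^2 - 1)*(y^2 + 2 - 2*x*y) + x^2 - 4"
    unfolding zeq by (simp add: power2_eq_square power3_eq_cube algebra_simps)
  then have key: "0 \<le> (y^2 - 1)*(y^2 + 2 - 2*x*y) + x^2 - 4" using cub by linarith
  have b: "2*x*y \<le> y^2 + 2"
  proof (rule ccontr)
    assume "\<not> 2*x*y \<le> y^2 + 2"
    then have "y^2 + 2 - 2*x*y \<le> -1" by simp
    moreover have "0 \<le> y^2 - 1" using y3 by (simp add: power2_eq_square)
    ultimately have "(y^2 - 1)*(y^2 + 2 - 2*x*y) \<le> (y^2 - 1) * (-1)"
      using mult_left_mono by blast
    then have "(y^2 - 1)*(y^2 + 2 - 2*x*y) \<le> 1 - y^2" by simp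
    moreover have "x^2 < y^2" using xy x2 power_strict_mono[of x y 2] by simp
    ultimately show False using key by linarith
  qed
  show "2*x \<le> y"
  proof (rule ccontr)
    assume "\<not> 2*x \<le> y"
    then have "(y + 1) * y \<le> 2*x*y" using y3 by (simp add: mult_right_mono)
    then show False using b y3 by (simp add: power2_eq_square algebra_simps)
  qed
qed

section \<open>Chebyshev recurrences\<close>

lemma chebyshev_recurrence_incseq:
  fixes s :: "nat \<Rightarrow> real"
  assumes t: "2 \<le> t" and rec: "\<And>n. s (Suc (Suc n)) = t * s (Suc n) - s n"
    and s0: "0 \<le> s 0" and s1: "s 0 \<le> s 1"
  shows "incseq s"
proof -
  have "s 0 \<le> s n \<and> s n \<le> s (Suc n)" for n
  proof (induction n)
    case 0
    then show ?case using s1 by simp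
  next
    case (Suc n)
    then have "0 \<le> (t - 2) * s (Suc n)" using t s0 by simp
    moreover have "s (Suc (Suc n)) - s (Suc n) = (t - 2) * s (Suc n) + (s (Suc n) - s n)"
      using rec[of n] by (simp add: algebra_simps)
    ultimately show ?case using Suc by linarith
  qed
  then show ?thesis by (simp add: incseq_SucI)
qed

lemma chebyshev_grid_pos:
  fixes f :: "nat \<Rightarrow> nat \<Rightarrow> real"
  assumes t: "2 \<le> t"
    and rec_k: "\<And>k h. f (Suc (Suc k)) h = t * f (Suc k) h - f k h"
    and rec_h: "\<And>k h. f k (Suc (Suc h)) = t * f k (Suc h) - f k h"
    and f00: "0 < f 0 0" and f01: "f 0 0 \<le> f 0 1" and f10: "f 0 0 \<le> f 1 0"
    and f11: "f 0 1 + f 1 0 \<le> f 1 1 + f 0 0"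
  shows "0 < f k h"
proof -
  have "incseq (\<lambda>h. f 1 h - f 0 h)"
    by (rule chebyshev_recurrence_incseq[OF t]) (use f10 f11 in \<open>simp_all add: rec_h algebra_simps\<close>)
  from incseqD[OF this le0, of h] have step: "f 0 h \<le> f 1 h" using f10 by simp
  have "incseq (f 0)"
    using t rec_h f00 f01 by (intro chebyshev_recurrence_incseq) auto
  from incseqD[OF this le0, of h] have f0h: "f 0 0 \<le> f 0 h" .
  have "incseq (\<lambda>k. f k h)"
    using t rec_k f00 f0h step by (intro chebyshev_recurrence_incseq) auto
  from incseqD[OF this le0, of k] have "f 0 h \<le> f k h" by simp
  then show ?thesis using f00 f0h by linarith
qed

definition gap :: "real^2^2 \<Rightarrow> real^2^2 \<Rightarrow> nat \<Rightarrow> nat \<Rightarrow> real^2^2" where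
  "gap A B k h = word_mat A B (wpow [La, Lb, Lb] (k + h + 2)) -
     word_mat A B ([La, Lb] @ wpow [La, Lb, Lb] k @ [La, Lb] @ wpow [La, Lb, Lb] h @ [La, Lb])"

lemma gap_recurrences:
  assumes "det A = 1" and "det B = 1"
  defines "t \<equiv> trace (word_mat A B [La, Lb, Lb])"
  shows "gap A B (Suc (Suc k)) h = t *\<^sub>R gap A B (Suc k) h - gap A B k h"
    and "gap A B k (Suc (Suc h)) = t *\<^sub>R gap A B k (Suc h) - gap A B k h"
proof -
  define W where "W n = word_mat A B (wpow [La, Lb, Lb] n)" for n
  define X where "X = word_mat A B [La, Lb]"
  have W: "W (Suc (Suc n)) = t *\<^sub>R W (Suc n) - W n" for n
    unfolding W_def t_def using assms by (intro word_mat_wpow_recurrence det_word_mat)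
  have gap: "gap A B k h = W (k + h + 2) - X ** (W k ** (X ** (W h ** X)))" for k h
    unfolding gap_def word_mat_append W_def X_def ..
  have "Suc (Suc k) + h + 2 = Suc (Suc (k + h + 2))" "Suc k + h + 2 = Suc (k + h + 2)"
    "k + Suc (Suc h) + 2 = Suc (Suc (k + h + 2))" "k + Suc h + 2 = Suc (k + h + 2)"
    by simp_all
  then show "gap A B (Suc (Suc k)) h = t *\<^sub>R gap A B (Suc k) h - gap A B k h"
    and "gap A B k (Suc (Suc h)) = t *\<^sub>R gap A B k (Suc h) - gap A B k h"
    unfolding gap by (simp_all only: W)
      (simp_all add: matrix_diff_rdistrib matrix_diff_ldistrib matrix_scalar_ac
        scalar_matrix_assoc[symmetric] algebra_simps)
qed

lemma trace_word_lt_if_gap_pos: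
  fixes A B :: "real^2^2"
  assumes dA: "det A = 1" and dB: "det B = 1"
    and A: "\<And>i j. 0 \<le> A$i$j" and B: "\<And>i j. 0 \<le> B$i$j"
    and gap_pos: "\<And>i j. 0 < (gap A B k h ** A)$i$j"
  shows "trace (word_mat A B ([La, Lb, Lb] @ w @ [La, Lb] @ wpow [La, Lb, Lb] k @ [La, Lb]
                   @ wpow [La, Lb, Lb] h @ [La, Lb]))
         < trace (word_mat A B ([La, Lb, Lb] @ w @ wpow [La, Lb, Lb] (k + h + 2)))"
proof -
  define Q where "Q = word_mat A B ([Lb, Lb] @ w)"
  have prefix: "word_mat A B ([La, Lb, Lb] @ w @ v) = A ** Q ** word_mat A B v" for v
    by (simp add: Q_def word_mat_append matrix_mul_assoc)
  have "trace (word_mat A B ([La, Lb, Lb] @ w @ wpow [La, Lb, Lb] (k + h + 2))) -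
        trace (word_mat A B ([La, Lb, Lb] @ w @ [La, Lb] @ wpow [La, Lb, Lb] k @ [La, Lb]
                   @ wpow [La, Lb, Lb] h @ [La, Lb]))
      = trace (A ** Q ** gap A B k h)"
    by (simp only: prefix gap_def matrix_diff_ldistrib trace_sub)
  also have "\<dots> = trace (Q ** (gap A B k h ** A))"
    by (metis matrix_mul_assoc trace_mul_sym)
  also have "\<dots> > 0"
  proof (rule trace_mult_pos)
    show "0 \<le> Q $ i $ j" for i j unfolding Q_def using A B by (rule word_mat_nonneg)
    show "det Q = 1" unfolding Q_def using dA dB by (rule det_word_mat)
  qed (rule gap_pos)
  finally show ?thesis by simp
qed

section \<open>Positivity certificates\<close>

text \<open>Certificates live in \<open>\<int>[e, d][u]\<close> with \<open>u\<^sup>2 = y u - 1\<close> and \<open>y = 4 + 2e + d\<close>.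
  A polynomial in one variable is the list of its coefficients, constant term first; a
  polynomial in \<open>e, d\<close> is the list of its coefficients in \<open>e\<close>, each a polynomial in \<open>d\<close>;
  a pair \<open>(a, b)\<close> stands for \<open>a + b u\<close>.\<close>

fun peval :: "int list \<Rightarrow> real \<Rightarrow> real" where
  "peval [] x = 0"
| "peval (c # cs) x = of_int c + x * peval cs x"

fun padd :: "int list \<Rightarrow> int list \<Rightarrow> int list" where
  "padd [] q = q"
| "padd p [] = p"
| "padd (a # p) (b # q) = (a + b) # padd p q"

fun pmult :: "int list \<Rightarrow> int list \<Rightarrow> int list" where
  "pmult [] q = []"
| "pmult (a # p) q = padd (map ((*) a) q) (0 # pmult p q)"

lemma peval_padd: "peval (padd p q) x = peval p x + peval q x"
  by (induction p q rule: padd.induct) (auto simp: algebra_simps)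

lemma peval_pmult: "peval (pmult p q) x = peval p x * peval q x"
proof -
  have "peval (map ((*) a) q) x = of_int a * peval q x" for a
    by (induction q) (auto simp: algebra_simps)
  then show ?thesis by (induction p) (auto simp: peval_padd algebra_simps)
qed

lemma peval_nonneg: "\<forall>c \<in> set p. 0 \<le> c \<Longrightarrow> 0 \<le> x \<Longrightarrow> 0 \<le> peval p x"
  by (induction p) auto

fun bpeval :: "int list list \<Rightarrow> real \<Rightarrow> real \<Rightarrow> real" where
  "bpeval [] e d = 0"
| "bpeval (p # ps) e d = peval p d + e * bpeval ps e d"

fun bpadd :: "int list list \<Rightarrow> int list list \<Rightarrow> int list list" where
  "bpadd [] q = q"
| "bpadd p [] = p"
| "bpadd (a # p) (b # q) = padd a b # bpadd p q"

fun bpmult :: "int list list \<Rightarrow> int list list \<Rightarrow> int list list" where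
  "bpmult [] q = []"
| "bpmult (r # p) q = bpadd (map (pmult r) q) ([] # bpmult p q)"

definition bpneg :: "int list list \<Rightarrow> int list list" where
  "bpneg p = map (map uminus) p"

definition nonneg_coeffs :: "int list list \<Rightarrow> bool" where
  "nonneg_coeffs p \<longleftrightarrow> (\<forall>q \<in> set p. \<forall>c \<in> set q. 0 \<le> c)"

lemma bpeval_bpadd: "bpeval (bpadd p q) e d = bpeval p e d + bpeval q e d"
  by (induction p q rule: bpadd.induct) (auto simp: peval_padd algebra_simps)

lemma bpeval_bpmult: "bpeval (bpmult p q) e d = bpeval p e d * bpeval q e d"
proof -
  have "bpeval (map (pmult r) q) e d = peval r d * bpeval q e d" for r
    by (induction q) (auto simp: peval_pmult algebra_simps)
  then show ?thesis by (induction p) (auto simp: bpeval_bpadd algebra_simps)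
qed

lemma bpeval_bpneg: "bpeval (bpneg p) e d = - bpeval p e d"
proof -
  have "peval (map uminus q) x = - peval q x" for q x by (induction q) auto
  then show ?thesis unfolding bpneg_def by (induction p) auto
qed

lemma bpeval_nonneg: "nonneg_coeffs p \<Longrightarrow> 0 \<le> e \<Longrightarrow> 0 \<le> d \<Longrightarrow> 0 \<le> bpeval p e d"
  unfolding nonneg_coeffs_def by (induction p) (auto intro!: add_nonneg_nonneg peval_nonneg)

definition bp_y :: "int list list" where
  "bp_y = [[4, 1], [2]]"

lemma bpeval_bp_y: "bpeval bp_y e d = 4 + 2 * e + d"
  by (simp add: bp_y_def)

type_synonym qelem = "int list list \<times> int list list"

fun qeval :: "qelem \<Rightarrow> real \<Rightarrow> real \<Rightarrow> real \<Rightarrow> real" where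
  "qeval (a, b) e d u = bpeval a e d + bpeval b e d * u"

fun qadd :: "qelem \<Rightarrow> qelem \<Rightarrow> qelem" where
  "qadd (a, b) (a', b') = (bpadd a a', bpadd b b')"

fun qneg :: "qelem \<Rightarrow> qelem" where
  "qneg (a, b) = (bpneg a, bpneg b)"

fun qmult :: "qelem \<Rightarrow> qelem \<Rightarrow> qelem" where
  "qmult (a, b) (a', b') = (let bb' = bpmult b b' in
     (bpadd (bpmult a a') (bpneg bb'), bpadd (bpadd (bpmult a b') (bpmult b a')) (bpmult bp_y bb')))"

text \<open>The second disjunct certifies \<open>a + b u \<ge> 0\<close> through \<open>a + b u = (a + y b) + (- b) (y - u)\<close>.\<close>

fun qnonneg :: "qelem \<Rightarrow> bool" where
  "qnonneg (a, b) \<longleftrightarrow> nonneg_coeffs a \<and> nonneg_coeffs b \<or>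
     nonneg_coeffs (bpadd a (bpmult bp_y b)) \<and> nonneg_coeffs (bpneg b)"

definition qge1 :: "qelem \<Rightarrow> bool" where
  "qge1 q \<longleftrightarrow> qnonneg (qadd q (qneg ([[1]], [])))"

type_synonym qmat = "qelem \<times> qelem \<times> qelem \<times> qelem"

fun qmat_eval :: "qmat \<Rightarrow> real \<Rightarrow> real \<Rightarrow> real \<Rightarrow> real^2^2" where
  "qmat_eval (a, b, c, g) e d u = m22 (qeval a e d u) (qeval b e d u) (qeval c e d u) (qeval g e d u)"

fun qmat_add :: "qmat \<Rightarrow> qmat \<Rightarrow> qmat" where
  "qmat_add (a, b, c, g) (a', b', c', g') = (qadd a a', qadd b b', qadd c c', qadd g g')"

fun qmat_neg :: "qmat \<Rightarrow> qmat" where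
  "qmat_neg (a, b, c, g) = (qneg a, qneg b, qneg c, qneg g)"

fun qmat_mult :: "qmat \<Rightarrow> qmat \<Rightarrow> qmat" where
  "qmat_mult (a, b, c, g) (a', b', c', g') =
     (qadd (qmult a a') (qmult b c'), qadd (qmult a b') (qmult b g'),
      qadd (qmult c a') (qmult g c'), qadd (qmult c b') (qmult g g'))"

fun qmat_nonneg :: "qmat \<Rightarrow> bool" where
  "qmat_nonneg (a, b, c, g) \<longleftrightarrow> qnonneg a \<and> qnonneg b \<and> qnonneg c \<and> qnonneg g"

fun qmat_ge1 :: "qmat \<Rightarrow> bool" where
  "qmat_ge1 (a, b, c, g) \<longleftrightarrow> qge1 a \<and> qge1 b \<and> qge1 c \<and> qge1 g"

lemma qeval_qadd: "qeval (qadd p q) e d u = qeval p e d u + qeval q e d u"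
  by (cases p; cases q) (simp add: bpeval_bpadd algebra_simps)

lemma qeval_qneg: "qeval (qneg p) e d u = - qeval p e d u"
  by (cases p) (simp add: bpeval_bpneg)

lemma qmat_eval_add: "qmat_eval (qmat_add S T) e d u = qmat_eval S e d u + qmat_eval T e d u"
  by (cases S; cases T) (simp add: m22_add qeval_qadd bpeval_bpadd algebra_simps)

lemma qmat_eval_neg: "qmat_eval (qmat_neg S) e d u = - qmat_eval S e d u"
  by (cases S) (simp add: m22_def vec_eq_iff forall_2 qeval_qneg bpeval_bpneg)

locale model_params =
  fixes e d u :: real
  assumes e_nonneg: "0 \<le> e" and d_nonneg: "0 \<le> d"
    and u_root: "u * u = (4 + 2 * e + d) * u - 1"
    and u_nonneg: "0 \<le> u" and u_le: "u \<le> 4 + 2 * e + d"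
begin

lemma qeval_qmult: "qeval (qmult p q) e d u = qeval p e d u * qeval q e d u"
proof (cases p, cases q)
  fix a b a' b' assume pq: "p = (a, b)" "q = (a', b')"
  have "u * u * (bpeval b e d * bpeval b' e d) = ((4 + 2 * e + d) * u - 1) * (bpeval b e d * bpeval b' e d)"
    using u_root by simp
  then show ?thesis
    by (simp add: pq Let_def bpeval_bpadd bpeval_bpmult bpeval_bpneg bpeval_bp_y algebra_simps)
qed

lemma qeval_nonneg:
  assumes "qnonneg q" shows "0 \<le> qeval q e d u"
proof (cases q)
  case (Pair a b)
  consider "nonneg_coeffs a" "nonneg_coeffs b"
    | "nonneg_coeffs (bpadd a (bpmult bp_y b))" "nonneg_coeffs (bpneg b)"
    using assms by (auto simp: Pair)
  then show ?thesis
  proof cases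
    case 1
    then show ?thesis using bpeval_nonneg e_nonneg d_nonneg u_nonneg by (simp add: Pair)
  next
    case 2
    have "qeval q e d u =
        bpeval (bpadd a (bpmult bp_y b)) e d + bpeval (bpneg b) e d * ((4 + 2 * e + d) - u)"
      by (simp add: Pair bpeval_bpadd bpeval_bpmult bpeval_bpneg bpeval_bp_y algebra_simps)
    with 2 show ?thesis using bpeval_nonneg e_nonneg d_nonneg u_le by simp
  qed
qed

lemma qeval_ge1: "qge1 q \<Longrightarrow> 1 \<le> qeval q e d u"
  using qeval_nonneg[of "qadd q (qneg ([[1]], []))"] by (simp add: qge1_def qeval_qadd qeval_qneg bpneg_def)

lemma qmat_eval_mult: "qmat_eval (qmat_mult S T) e d u = qmat_eval S e d u ** qmat_eval T e d u"
  by (cases S; cases T) (simp add: m22_mult qeval_qadd qeval_qmult bpeval_bpadd del: qmult.simps)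

lemma qmat_eval_nonneg: "qmat_nonneg S \<Longrightarrow> 0 \<le> qmat_eval S e d u $ i $ j"
  using qeval_nonneg exhaust_2[of i] exhaust_2[of j] by (cases S) (auto simp del: qeval.simps)

lemma qmat_eval_pos: "qmat_ge1 S \<Longrightarrow> 0 < qmat_eval S e d u $ i $ j"
  using qeval_ge1 exhaust_2[of i] exhaust_2[of j]
  by (cases S) (force simp del: qeval.simps)

end

section \<open>The real model\<close>

text \<open>With \<open>y = 4 + 2e + d\<close>, the eigenvalues of \<open>model_B\<close> are \<open>u\<close> and \<open>y - u = 1/u\<close>; the
  lower left entry is chosen so that \<open>tr AB = y\<^sup>2 - 1\<close>.\<close>

definition model_A :: "real \<Rightarrow> real^2^2" where
  "model_A e = m22 (1 + e) 1 e 1"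

definition model_B :: "real \<Rightarrow> real \<Rightarrow> real \<Rightarrow> real^2^2" where
  "model_B e d u = (let y = 4 + 2 * e + d in m22 (y - u) 0 (y^2 - 1 - (1 + e) * y + e * u) u)"

definition sym_A :: qmat where
  "sym_A = (([[1], [1]], []), ([[1]], []), ([[], [1]], []), ([[1]], []))"

text \<open>The lower left entry of \<open>sym_B\<close> is \<open>y\<^sup>2 - 1 - (1 + e) y + e u\<close>, expanded.\<close>

definition sym_B :: qmat where
  "sym_B = ((bp_y, [[-1]]), ([], []), ([[11, 7, 1], [10, 3], [2]], [[], [1]]), ([], [[1]]))"

fun sym_word :: "letter list \<Rightarrow> qmat" where
  "sym_word [] = (([[1]], []), ([], []), ([], []), ([[1]], []))"
| "sym_word (l # w) = qmat_mult (case l of La \<Rightarrow> sym_A | Lb \<Rightarrow> sym_B) (sym_word w)"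

definition sym_gap :: "nat \<Rightarrow> nat \<Rightarrow> qmat" where
  "sym_gap k h = qmat_mult (qmat_add (sym_word (wpow [La, Lb, Lb] (k + h + 2)))
     (qmat_neg (sym_word ([La, Lb] @ wpow [La, Lb, Lb] k @ [La, Lb] @ wpow [La, Lb, Lb] h @ [La, Lb]))))
     sym_A"

lemma sym_gap_00_ge1: "qmat_ge1 (sym_gap 0 0)"
  by code_simp

lemma sym_gap_01_ge: "qmat_nonneg (qmat_add (sym_gap 0 1) (qmat_neg (sym_gap 0 0)))"
  by code_simp

lemma sym_gap_10_ge: "qmat_nonneg (qmat_add (sym_gap 1 0) (qmat_neg (sym_gap 0 0)))"
  by code_simp

lemma sym_gap_11_ge:
  "qmat_nonneg (qmat_add (qmat_add (sym_gap 1 1) (sym_gap 0 0))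
     (qmat_neg (qmat_add (sym_gap 0 1) (sym_gap 1 0))))"
  by code_simp

lemma sym_A_nonneg: "qmat_nonneg sym_A"
  by code_simp

lemma sym_B_nonneg: "qmat_nonneg sym_B"
  by code_simp

context model_params
begin

lemma qmat_eval_sym_A: "qmat_eval sym_A e d u = model_A e"
  by (simp add: sym_A_def model_A_def)

lemma qmat_eval_sym_B: "qmat_eval sym_B e d u = model_B e d u"
  by (simp add: sym_B_def model_B_def Let_def bp_y_def m22_eq_iff power2_eq_square algebra_simps)

lemma qmat_eval_sym_word: "qmat_eval (sym_word w) e d u = word_mat (model_A e) (model_B e d u) w"
  by (induction w) (auto simp: qmat_eval_mult qmat_eval_sym_A qmat_eval_sym_B m22_one split: letter.split)

lemma qmat_eval_sym_gap:
  "qmat_eval (sym_gap k h) e d u = gap (model_A e) (model_B e d u) k h ** model_A e"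
  by (simp add: sym_gap_def gap_def qmat_eval_mult qmat_eval_add qmat_eval_neg qmat_eval_sym_word
      qmat_eval_sym_A del: sym_word.simps word_mat.simps)

lemma det_model_A: "det (model_A e) = 1"
  by (simp add: model_A_def det_m22)

lemma det_model_B: "det (model_B e d u) = 1"
  using u_root by (simp add: model_B_def Let_def det_m22 algebra_simps)

lemma model_A_nonneg: "0 \<le> model_A e $ i $ j"
  using qmat_eval_nonneg[OF sym_A_nonneg] by (simp add: qmat_eval_sym_A)

lemma model_B_nonneg: "0 \<le> model_B e d u $ i $ j"
  using qmat_eval_nonneg[OF sym_B_nonneg] by (simp add: qmat_eval_sym_B)

lemma traces_model:
  "trace (model_A e) = 2 + e"
  "trace (model_B e d u) = 4 + 2 * e + d"
  "trace (model_A e ** model_B e d u) = (4 + 2 * e + d)^2 - 1"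
  by (simp_all add: model_A_def model_B_def Let_def m22_mult trace_m22 algebra_simps)

lemma gap_mult_model_A_pos: "0 < (gap (model_A e) (model_B e d u) k h ** model_A e) $ i $ j"
proof -
  define f where "f k h = (gap (model_A e) (model_B e d u) k h ** model_A e) $ i $ j" for k h
  define t where "t = trace (word_mat (model_A e) (model_B e d u) [La, Lb, Lb])"
  have "2 \<le> t"
    unfolding t_def using model_A_nonneg model_B_nonneg det_model_A det_model_B
    by (intro trace_ge_2_if_nonneg_det_1 word_mat_nonneg det_word_mat)
  moreover have "f (Suc (Suc k)) h = t * f (Suc k) h - f k h"
    and "f k (Suc (Suc h)) = t * f k (Suc h) - f k h" for k h
    unfolding f_def t_def gap_recurrences[OF det_model_A det_model_B]
    by (simp_all add: matrix_diff_rdistrib scalar_matrix_assoc[symmetric])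
  moreover have "0 < f 0 0" "f 0 0 \<le> f 0 1" "f 0 0 \<le> f 1 0" "f 0 1 + f 1 0 \<le> f 1 1 + f 0 0"
    using qmat_eval_pos[OF sym_gap_00_ge1, of i j] qmat_eval_nonneg[OF sym_gap_01_ge, of i j]
      qmat_eval_nonneg[OF sym_gap_10_ge, of i j] qmat_eval_nonneg[OF sym_gap_11_ge, of i j]
    by (simp_all add: f_def qmat_eval_add qmat_eval_neg qmat_eval_sym_gap del: qmat_eval.simps)
  ultimately show ?thesis
    unfolding f_def[symmetric] by (rule chebyshev_grid_pos)
qed

lemma model_trace_gap:
  "trace (word_mat (model_A e) (model_B e d u) ([La, Lb, Lb] @ w @ [La, Lb] @ wpow [La, Lb, Lb] k
            @ [La, Lb] @ wpow [La, Lb, Lb] h @ [La, Lb]))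
   < trace (word_mat (model_A e) (model_B e d u) ([La, Lb, Lb] @ w @ wpow [La, Lb, Lb] (k + h + 2)))"
  using det_model_A det_model_B model_A_nonneg model_B_nonneg gap_mult_model_A_pos
  by (rule trace_word_lt_if_gap_pos)

end

lemma model_params_larger_root:
  assumes "0 \<le> e" and "0 \<le> d" and y: "y = 4 + 2 * e + d"
  shows "model_params e d ((y + sqrt (y^2 - 4)) / 2)"
proof -
  define s where "s = sqrt (y^2 - 4)"
  have "4 \<le> y" using assms by simp
  then have "4 \<le> y^2" using power_mono[of 4 y 2] by simp
  then have s2: "s * s = y^2 - 4" and "0 \<le> s" by (simp_all add: s_def)
  have "s \<le> sqrt (y^2)" unfolding s_def by (rule real_sqrt_le_mono) simp
  then have "s \<le> y" using \<open>4 \<le> y\<close> by simp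
  have "((y + s) / 2) * ((y + s) / 2) = y * ((y + s) / 2) - 1"
    using s2 by (simp add: field_simps power2_eq_square)
  then show ?thesis
    unfolding model_params_def s_def[symmetric] y[symmetric]
    using assms(1,2) \<open>4 \<le> y\<close> \<open>0 \<le> s\<close> \<open>s \<le> y\<close> by simp
qed

theorem lemma7p3:
  fixes A B :: "int^2^2" and w :: "letter list" and k h :: nat
  assumes "A \<in> SL2Z" and "B \<in> SL2Z"
    and "A ** B \<noteq> B ** A"
    and "well_oriented A B"
    and "2 \<le> trace A" and "trace A < trace B"
    and "trace (A ** B) > trace (B ** B)"
    and "trw A B (wpow [La, Lb] 3) \<le> trw A B (wpow [La, Lb, Lb] 2) - 2"
    and "6 dvd length ([La, Lb, Lb] @ w @ [La, Lb] @ wpow [La, Lb, Lb] k @ [La, Lb]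
                        @ wpow [La, Lb, Lb] h @ [La, Lb])"
    and "w = [] \<or> (\<exists>us. set us \<subseteq> {[La, Lb], [La, Lb, Lb]} \<and> w = concat us)"
  shows "trw A B ([La, Lb, Lb] @ w @ [La, Lb] @ wpow [La, Lb, Lb] k @ [La, Lb]
                   @ wpow [La, Lb, Lb] h @ [La, Lb])
         < trw A B ([La, Lb, Lb] @ w @ wpow [La, Lb, Lb] (k + h + 2))"
proof -
  define x y z where "x = trace A" and "y = trace B" and "z = trace (A ** B)"
  have dA: "det A = 1" and dB: "det B = 1" using assms(1,2) by (simp_all add: SL2Z_def)
  have trw: "trw A B v = trace_poly x y z v" for v
    by (simp add: trw_def phi_eq_word_mat trace_word_mat[OF dA dB] x_def y_def z_def)
  have "trace (B ** B) = y^2 - 2"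
    using trw[of "[Lb, Lb]"] by (simp add: trw_def trace_poly_bb)
  then have z: "z = y^2 - 1" and xy: "2 * x \<le> y"
    using traces_forced[of x y z] assms(5-8)
    by (simp_all add: trw trace_poly_ab_cubed trace_poly_abb_squared x_def y_def z_def)
  define e d where "e = real_of_int x - 2" and "d = real_of_int y - 2 * real_of_int x"
  define u where "u = (real_of_int y + sqrt ((real_of_int y)^2 - 4)) / 2"
  interpret model_params e d u
    unfolding u_def using assms(5) xy by (intro model_params_larger_root) (simp_all add: e_def d_def x_def)
  have "real_of_int (trw A B v) = trace (word_mat (model_A e) (model_B e d u) v)" for v
    using z by (simp add: trw trace_word_mat[OF det_model_A det_model_B] traces_model
        flip: trace_poly_of_int) (simp add: e_def d_def)
  then show ?thesis using model_trace_gap[of w k h] by (metis of_int_less_iff)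
qed

end
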